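(* Let $n$ be a positive integer, $B=\{x\in\mathbb{R}^n:\|x\|_2\le1\}$, $\mathcal{U}$ the uniform distribution on $B$, and $p$ the distribution on $\mathbb{R}^n$ that with probability $1/2$ draws $Z\sim\mathcal{U}$ and with probability $1/2$ draws a uniformly random element of $\{\pm e_1,\dots,\pm e_n\}$ (the signed standard basis vectors). Let $\lambda>0$, $k$ a positive integer, $\delta\in(0,1]$, $\sigma\in(0,1]$, let $d_{t-1}\in\mathbb{R}^n$ be any fixed vector, and let $\Phi_{t-1}=\mathbb{E}_{W\sim p}[\cosh(\lambda d_{t-1}^\top W)]$. If $X_t$ is sampled from an arbitrary $\sigma$-smooth distribution on $B$, then $$\Pr_{X_t}\!\left[\lambda d_{t-1}^\top X_t\ge 4\ln\!\left(\frac{4k\Phi_{t-1}}{\delta}\right)\right]\le(1-\sigma)^k+\delta.$$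
   Context: A distribution $\mu$ on $B$ is $\sigma$-smooth if $\mu(A)\le\mathcal{U}(A)/\sigma$ for all measurable $A\subseteq B$. *)

theory Defs
  imports "HOL-Probability.Probability"
begin

definition unit_ball :: "(real ^ 'n) set" where
  "unit_ball = cball 0 1"

definition unif_ball :: "(real ^ 'n) measure" where
  "unif_ball = uniform_measure lborel unit_ball"

definition signed_basis :: "(real ^ 'n) set" where
  "signed_basis = {axis i 1 | i. True} \<union> {axis i (-1) | i. True}"

definition signed_basis_pmf :: "(real ^ 'n) pmf" where
  "signed_basis_pmf = pmf_of_set signed_basis"

definition mix_p :: "(real ^ 'n) measure" where
  "mix_p = measure_of UNIV (sets borel)
     (\<lambda>A. ennreal (1/2) * emeasure unif_ball A
          + ennreal (1/2) * emeasure (measure_pmf signed_basis_pmf) A)"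

definition Phi :: "real \<Rightarrow> real ^ 'n \<Rightarrow> real" where
  "Phi lam d = (\<integral>w. cosh (lam * (d \<bullet> w)) \<partial>mix_p)"

definition sigma_smooth :: "real \<Rightarrow> (real ^ 'n) measure \<Rightarrow> bool" where
  "sigma_smooth \<sigma> \<mu> \<longleftrightarrow>
     prob_space \<mu> \<and> sets \<mu> = sets borel \<and> emeasure \<mu> unit_ball = 1 \<and>
     (\<forall>A \<in> sets borel. A \<subseteq> unit_ball \<longrightarrow> measure \<mu> A \<le> measure unif_ball A / \<sigma>)"

end

theory Submission
  imports Defs
begin

text \<open>
  Write \<open>f w = cosh (lam * (d \<bullet> w))\<close>. Since the mixture puts weight 1/2 on the uniform
  distribution, \<open>Phi lam d\<close> is at least half the uniform average of \<open>f\<close>; this average is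
  at least 1 and, by Markov's inequality with \<open>f \<ge> exp t / 2\<close> on the tail
  \<open>{lam * (d \<bullet> x) \<ge> t}\<close>, at least \<open>exp t / 2\<close> times the uniform mass \<open>u\<close> of the tail.
  At the threshold \<open>t = 4 ln a\<close>, \<open>a = 4 k Phi / \<delta> \<ge> 1\<close>, this gives \<open>k u \<le> \<delta> / a\<^sup>3 \<le> \<delta>\<close>.
  A \<open>\<sigma>\<close>-smooth distribution gives the tail mass at most \<open>min 1 (u / \<sigma>)\<close>, and
  \<open>min 1 (u / \<sigma>) \<le> (1 - \<sigma>)\<^sup>k + k u\<close> by Bernoulli's inequality.
\<close>

lemma sets_unif_ball [simp, measurable_cong]: "sets (unif_ball :: (real^'n) measure) = sets borel"
  unfolding unif_ball_def by simp

lemma space_unif_ball [simp]: "space (unif_ball :: (real^'n) measure) = UNIV"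
  unfolding unif_ball_def by simp

lemma unit_ball_in_borel [measurable]: "(unit_ball :: (real^'n) set) \<in> sets borel"
  unfolding unit_ball_def by simp

lemma prob_space_unif_ball: "prob_space (unif_ball :: (real^'n) measure)"
proof -
  have "measure lborel (cball (0::real^'n) 1) > 0"
    using content_cball_pos[of 1 "0::real^'n"] by simp
  then have "emeasure lborel (cball (0::real^'n) 1) \<noteq> 0"
    using emeasure_lborel_cball_finite[of "0::real^'n" 1]
    by (simp add: emeasure_eq_ennreal_measure)
  then show ?thesis
    unfolding unif_ball_def unit_ball_def
    using emeasure_lborel_cball_finite[of "0::real^'n" 1]
    by (intro prob_space_uniform_measure) auto
qed

lemma emeasure_unif_ball_outside: "emeasure unif_ball (- unit_ball :: (real^'n) set) = 0"
  unfolding unif_ball_def by (subst emeasure_uniform_measure) auto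

lemma signed_basis_subset_unit_ball: "(signed_basis :: (real^'n) set) \<subseteq> unit_ball"
proof -
  have "axis i (-1::real) = - axis i 1" for i :: 'n
    by (simp add: axis_def vec_eq_iff)
  then show ?thesis
    unfolding signed_basis_def unit_ball_def by auto
qed

lemma set_pmf_signed_basis_pmf: "set_pmf signed_basis_pmf = (signed_basis :: (real^'n) set)"
proof -
  have "signed_basis = range (\<lambda>i. axis i (1::real)) \<union> range (\<lambda>i::'n. axis i (-1::real))"
    unfolding signed_basis_def by auto
  then have "finite (signed_basis :: (real^'n) set)"
    by (metis finite_UnI finite finite_imageI)
  moreover have "(signed_basis :: (real^'n) set) \<noteq> {}"
    unfolding signed_basis_def by auto
  ultimately show ?thesis
    unfolding signed_basis_pmf_def by simp
qed

lemma emeasure_signed_basis_pmf_outside: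
  "emeasure (measure_pmf signed_basis_pmf) (- unit_ball :: (real^'n) set) = 0"
proof -
  have "- unit_ball \<inter> set_pmf signed_basis_pmf = ({} :: (real^'n) set)"
    using signed_basis_subset_unit_ball by (auto simp: set_pmf_signed_basis_pmf)
  then show ?thesis
    by (metis emeasure_Int_set_pmf emeasure_empty)
qed

lemma sets_mix_p [simp]: "sets (mix_p :: (real^'n) measure) = sets borel"
  unfolding mix_p_def using sets.sigma_sets_eq[of "borel :: (real^'n) measure"] by simp

lemma space_mix_p [simp]: "space (mix_p :: (real^'n) measure) = UNIV"
  unfolding mix_p_def by (simp add: space_measure_of_conv)

lemma emeasure_mix_p:
  fixes A :: "(real^'n) set"
  assumes "A \<in> sets borel"
  shows "emeasure mix_p A
    = ennreal (1/2) * emeasure unif_ball A + ennreal (1/2) * emeasure (measure_pmf signed_basis_pmf) A"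
  unfolding mix_p_def
proof (rule emeasure_measure_of_sigma)
  show "sigma_algebra UNIV (sets (borel :: (real^'n) measure))"
    using sets.sigma_algebra_axioms[of "borel :: (real^'n) measure"] by simp
  show "countably_additive (sets borel) (\<lambda>A :: (real^'n) set. ennreal (1/2) * emeasure unif_ball A
      + ennreal (1/2) * emeasure (measure_pmf signed_basis_pmf) A)"
    unfolding countably_additive_def
  proof safe
    fix F :: "nat \<Rightarrow> (real^'n) set"
    assume "range F \<subseteq> sets borel" "disjoint_family F"
    then show "(\<Sum>i. ennreal (1/2) * emeasure unif_ball (F i)
        + ennreal (1/2) * emeasure (measure_pmf signed_basis_pmf) (F i))
      = ennreal (1/2) * emeasure unif_ball (\<Union>i. F i)
        + ennreal (1/2) * emeasure (measure_pmf signed_basis_pmf) (\<Union>i. F i)"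
      by (simp add: suminf_add[symmetric] suminf_emeasure)
  qed
qed (auto simp: positive_def assms)

lemma scale_unif_ball_le_mix_p: "scale_measure (1/2) unif_ball \<le> (mix_p :: (real^'n) measure)"
proof -
  have "emeasure (scale_measure (1/2) unif_ball) A \<le> emeasure mix_p A" for A :: "(real^'n) set"
    by (cases "A \<in> sets borel")
       (auto simp: emeasure_mix_p divide_ennreal_def add_increasing2 emeasure_notin_sets)
  then show ?thesis
    unfolding le_measure_iff by (auto simp: le_fun_def)
qed

lemma emeasure_unif_ball_UNIV: "emeasure (unif_ball :: (real^'n) measure) UNIV = 1"
  using prob_space.emeasure_space_1[OF prob_space_unif_ball] by simp

lemma prob_space_mix_p: "prob_space (mix_p :: (real^'n) measure)"
proof (rule prob_spaceI)
  have "ennreal (1/2) + ennreal (1/2) = 1"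
    by (subst ennreal_plus[symmetric]) auto
  then show "emeasure mix_p (space mix_p) = 1"
    by (simp add: emeasure_mix_p emeasure_unif_ball_UNIV measure_pmf.emeasure_space_1[simplified])
qed

lemma AE_unif_ball_unit_ball: "AE w in (unif_ball :: (real^'n) measure). w \<in> unit_ball"
  by (rule AE_I'[of "- unit_ball"]) (auto simp: emeasure_unif_ball_outside)

lemma AE_mix_p_unit_ball: "AE w in (mix_p :: (real^'n) measure). w \<in> unit_ball"
  by (rule AE_I'[of "- unit_ball"])
     (auto simp: emeasure_mix_p emeasure_unif_ball_outside emeasure_signed_basis_pmf_outside)

lemma cosh_inner_le:
  fixes d w :: "'a::real_inner"
  assumes "norm w \<le> 1"
  shows "cosh (lam * (d \<bullet> w)) \<le> cosh (lam * norm d)"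
proof -
  have "\<bar>d \<bullet> w\<bar> \<le> norm d"
    using Cauchy_Schwarz_ineq2[of d w] assms mult_left_le[of "norm w" "norm d"] by simp
  then have "\<bar>lam * (d \<bullet> w)\<bar> \<le> \<bar>lam * norm d\<bar>"
    by (simp add: abs_mult mult_left_mono)
  then show ?thesis
    by (metis cosh_real_abs cosh_real_nonneg_le_iff abs_ge_zero)
qed

lemma integrable_cosh_inner:
  fixes M :: "'a::real_inner measure"
  assumes "finite_measure M" "sets M = sets borel" "AE w in M. norm w \<le> 1"
  shows "integrable M (\<lambda>w. cosh (lam * (d \<bullet> w)))"
proof (rule finite_measure.integrable_const_bound[OF assms(1)])
  show "AE w in M. norm (cosh (lam * (d \<bullet> w))) \<le> cosh (lam * norm d)"
    using assms(3) by eventually_elim (simp add: cosh_inner_le)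
  show "(\<lambda>w. cosh (lam * (d \<bullet> w))) \<in> borel_measurable M"
    by (subst measurable_cong_sets[OF assms(2) refl])
       (intro borel_measurable_continuous_onI continuous_intros)
qed

lemma integrable_unif_ball_cosh_inner:
  "integrable (unif_ball :: (real^'n) measure) (\<lambda>w. cosh (lam * (d \<bullet> w)))"
  using AE_unif_ball_unit_ball prob_space_unif_ball
  by (intro integrable_cosh_inner) (auto simp: unit_ball_def prob_space_def)

lemma integrable_mix_p_cosh_inner:
  "integrable (mix_p :: (real^'n) measure) (\<lambda>w. cosh (lam * (d \<bullet> w)))"
  using AE_mix_p_unit_ball prob_space_mix_p
  by (intro integrable_cosh_inner) (auto simp: unit_ball_def prob_space_def)

lemma Phi_ge_half_integral_unif_ball:
  "(\<integral>w. cosh (lam * (d \<bullet> w)) \<partial>unif_ball) / 2 \<le> Phi lam (d :: real^'n)"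
proof -
  let ?f = "\<lambda>w::real^'n. cosh (lam * (d \<bullet> w))"
  have f_borel: "?f \<in> borel_measurable unif_ball"
    by (subst measurable_cong_sets[OF sets_unif_ball refl])
       (intro borel_measurable_continuous_onI continuous_intros)
  have "ennreal ((\<integral>w. ?f w \<partial>unif_ball) / 2) = (\<integral>\<^sup>+w. ?f w \<partial>unif_ball) / 2"
    using integrable_unif_ball_cosh_inner
    by (subst nn_integral_eq_integral) (auto simp: ennreal_divide_numeral)
  also have "\<dots> = (\<integral>\<^sup>+w. ?f w \<partial>scale_measure (1/2) unif_ball)"
    using f_borel by (simp add: nn_integral_scale_measure divide_ennreal_def mult.commute)
  also have "\<dots> \<le> (\<integral>\<^sup>+w. ?f w \<partial>mix_p)"
    by (intro nn_integral_mono_measure scale_unif_ball_le_mix_p) simp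
  also have "\<dots> = ennreal (Phi lam d)"
    unfolding Phi_def using integrable_mix_p_cosh_inner by (subst nn_integral_eq_integral) auto
  finally show ?thesis
    by (simp add: Phi_def)
qed

lemma Phi_ge_half: "1/2 \<le> Phi lam (d :: real^'n)"
proof -
  interpret U: prob_space "unif_ball :: (real^'n) measure"
    by (rule prob_space_unif_ball)
  have "1 \<le> (\<integral>w. cosh (lam * (d \<bullet> w)) \<partial>unif_ball)"
    using U.integral_ge_const[of "\<lambda>w. cosh (lam * (d \<bullet> w))" 1]
      integrable_unif_ball_cosh_inner[of lam d] by (simp add: cosh_real_ge_1)
  then show ?thesis
    using Phi_ge_half_integral_unif_ball[of lam d] by linarith
qed

lemma unif_ball_tail_le_Phi:
  "exp t / 4 * measure unif_ball {x. t \<le> lam * (d \<bullet> x)} \<le> Phi lam (d :: real^'n)"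
proof -
  interpret U: prob_space "unif_ball :: (real^'n) measure"
    by (rule prob_space_unif_ball)
  let ?f = "\<lambda>w::real^'n. cosh (lam * (d \<bullet> w))"
  have [measurable]: "?f \<in> borel_measurable borel"
    by (intro borel_measurable_continuous_onI continuous_intros)
  have "{x. t \<le> lam * (d \<bullet> x)} \<subseteq> {x \<in> space unif_ball. exp t / 2 \<le> ?f x}"
    by (auto simp: cosh_def intro!: add_increasing2)
  then have "measure unif_ball {x. t \<le> lam * (d \<bullet> x)}
      \<le> measure unif_ball {x \<in> space unif_ball. exp t / 2 \<le> ?f x}"
    by (rule U.finite_measure_mono) measurable
  also have "\<dots> \<le> (\<integral>w. ?f w \<partial>unif_ball) / (exp t / 2)"
    using integrable_unif_ball_cosh_inner[of lam d]
    by (intro integral_Markov_inequality_measure[where A = UNIV]) auto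
  also have "\<dots> \<le> 2 * Phi lam d / (exp t / 2)"
    using Phi_ge_half_integral_unif_ball[of lam d] by (intro divide_right_mono) auto
  finally show ?thesis
    by (simp add: field_simps)
qed

lemma unif_ball_tail_at_threshold:
  fixes d :: "real^'n"
  assumes "0 < k" "0 < \<delta>" "\<delta> \<le> 1"
  shows "real k * measure unif_ball {x. 4 * ln (4 * real k * Phi lam d / \<delta>) \<le> lam * (d \<bullet> x)}
    \<le> \<delta>"
proof -
  define a where "a = 4 * real k * Phi lam d / \<delta>"
  define u where "u = measure unif_ball {x. 4 * ln a \<le> lam * (d \<bullet> x)}"
  have "1 * 2 \<le> real k * (4 * Phi lam d)"
    using Phi_ge_half[of lam d] assms by (intro mult_mono) auto
  then have "1 \<le> a"
    using assms unfolding a_def by (simp add: field_simps)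
  then have "exp (4 * ln a) = a ^ 4"
    by (simp add: exp_of_nat_mult[of 4, simplified])
  then have "a ^ 4 * u \<le> 4 * Phi lam d"
    using unif_ball_tail_le_Phi[of "4 * ln a" lam d] unfolding u_def by simp
  then have "real k * u * a ^ 3 * a \<le> \<delta> * a"
    using assms unfolding a_def by (simp add: field_simps power_numeral_reduce)
  then have "real k * u * a ^ 3 \<le> \<delta>"
    using \<open>1 \<le> a\<close> by simp
  moreover have "real k * u * 1 \<le> real k * u * a ^ 3"
    using \<open>1 \<le> a\<close> by (intro mult_left_mono) (auto simp: u_def one_le_power)
  ultimately show ?thesis
    unfolding u_def a_def by linarith
qed

lemma sigma_smooth_measure_le:
  fixes \<mu> :: "(real^'n) measure"
  assumes smooth: "sigma_smooth \<sigma> \<mu>" and "0 < \<sigma>" and A: "A \<in> sets borel"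
  shows "measure \<mu> A \<le> measure unif_ball A / \<sigma>"
proof -
  interpret prob_space \<mu>
    using smooth unfolding sigma_smooth_def by simp
  have sets_\<mu>: "sets \<mu> = sets borel"
    using smooth unfolding sigma_smooth_def by simp
  have "AE x in \<mu>. x \<in> unit_ball"
    using smooth sets_\<mu> unfolding sigma_smooth_def by (simp add: AE_in_set_eq_1 emeasure_eq_measure)
  then have "measure \<mu> A = measure \<mu> (A \<inter> unit_ball)"
    using A sets_\<mu> by (intro measure_eq_AE) auto
  also have "\<dots> \<le> measure unif_ball (A \<inter> unit_ball) / \<sigma>"
    using smooth A unfolding sigma_smooth_def by auto
  also have "\<dots> \<le> measure unif_ball A / \<sigma>"
    using A \<open>0 < \<sigma>\<close> prob_space_unif_ball
    by (intro divide_right_mono finite_measure.finite_measure_mono) (auto simp: prob_space_def)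
  finally show ?thesis .
qed

lemma le_one_minus_power_add_mult:
  fixes \<sigma> m u :: real
  assumes "0 < \<sigma>" "\<sigma> \<le> 1" "m \<le> 1" "m \<le> u / \<sigma>" "0 \<le> u"
  shows "m \<le> (1 - \<sigma>) ^ k + k * u"
proof (cases "k * \<sigma> \<le> 1")
  case True
  have "1 - k * \<sigma> \<le> (1 - \<sigma>) ^ k"
    using Bernoulli_inequality[of "- \<sigma>" k] assms by simp
  moreover have "m * (1 - k * \<sigma>) \<le> 1 - k * \<sigma>"
    using mult_right_mono[of m 1 "1 - k * \<sigma>"] True assms by simp
  moreover have "k * (\<sigma> * m) \<le> k * u"
    using assms by (intro mult_left_mono) (auto simp: field_simps)
  ultimately show ?thesis
    by (simp add: algebra_simps)
next
  case False
  have "m \<le> k * (\<sigma> * m) \<or> m \<le> 0"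
    using False by (auto simp: mult_le_cancel_right1)
  moreover have "k * (\<sigma> * m) \<le> k * u"
    using assms by (intro mult_left_mono) (auto simp: field_simps)
  moreover have "0 \<le> (1 - \<sigma>) ^ k" "0 \<le> k * u"
    using assms by auto
  ultimately show ?thesis
    by linarith
qed

theorem mainTheorem6:
  fixes lam \<delta> \<sigma> :: real and k :: nat and d :: "real ^ 'n" and \<mu> :: "(real ^ 'n) measure"
  assumes "lam > 0" and "k > 0"
    and "0 < \<delta>" and "\<delta> \<le> 1" and "0 < \<sigma>" and "\<sigma> \<le> 1"
    and "sigma_smooth \<sigma> \<mu>"
  shows "measure \<mu> {x. lam * (d \<bullet> x) \<ge> 4 * ln (4 * real k * Phi lam d / \<delta>)}
           \<le> (1 - \<sigma>) ^ k + \<delta>"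
proof -
  let ?S = "{x. 4 * ln (4 * real k * Phi lam d / \<delta>) \<le> lam * (d \<bullet> x)}"
  have "?S \<in> sets borel"
    by measurable
  have "measure \<mu> ?S \<le> 1"
    using \<open>sigma_smooth \<sigma> \<mu>\<close> unfolding sigma_smooth_def by (simp add: prob_space.prob_le_1)
  then have "measure \<mu> ?S \<le> (1 - \<sigma>) ^ k + real k * measure unif_ball ?S"
    using \<open>?S \<in> sets borel\<close> assms
    by (intro le_one_minus_power_add_mult sigma_smooth_measure_le) auto
  also have "\<dots> \<le> (1 - \<sigma>) ^ k + \<delta>"
    using unif_ball_tail_at_threshold assms by simp
  finally show ?thesis .
qed

end
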